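(* Let $f$ and $g$ be L-additive arithmetic functions whose associated completely multiplicative functions $h_f$, $h_g$ are nonzero-valued, with generalized von Mangoldt functions $\Lambda_f,\Lambda_g$. Then for every positive integer $n$: $(\Lambda_f\ast\Lambda_g)(n)=\frac{(\alpha-1)f(p)g(p)}{h_f(p)h_g(p)}$ if $n=p^\alpha$ for a prime $p$ and integer $\alpha\geq1$; $(\Lambda_f\ast\Lambda_g)(n)=\frac{f(p)g(q)}{h_f(p)h_g(q)}+\frac{f(q)g(p)}{h_f(q)h_g(p)}$ if $n=p^\alpha q^\beta$ for distinct primes $p,q$ and integers $\alpha,\beta\geq1$; and $(\Lambda_f\ast\Lambda_g)(n)=0$ otherwise.
   Context: An arithmetic function $f:\mathbb{N}\to\mathbb{C}$ is L-additive if there is a completely multiplicative function $h_f$ such that $f(mn)=f(m)h_f(n)+f(n)h_f(m)$ for all positive integers $m,n$; such an $h_f$ is fixed (likewise $h_g$ for $g$). $\Lambda_f(n)=\frac{f(p)}{h_f(p)}$ if $n=p^k$ for some prime $p$ and integer $k\geq1$, and $0$ otherwise (similarly $\Lambda_g$). $\ast$ is Dirichlet convolution $(F\ast G)(n)=\sum_{d\mid n}F(d)G(n/d)$. *)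

theory Defs
  imports Complex_Main "HOL-Computational_Algebra.Primes"
begin

definition completely_multiplicative :: "(nat \<Rightarrow> complex) \<Rightarrow> bool" where
  "completely_multiplicative h \<longleftrightarrow> h 1 = 1 \<and> (\<forall>m n. m > 0 \<longrightarrow> n > 0 \<longrightarrow> h (m * n) = h m * h n)"

definition L_additive_with :: "(nat \<Rightarrow> complex) \<Rightarrow> (nat \<Rightarrow> complex) \<Rightarrow> bool" where
  "L_additive_with f h \<longleftrightarrow> completely_multiplicative h \<and>
     (\<forall>m n. m > 0 \<longrightarrow> n > 0 \<longrightarrow> f (m * n) = f m * h n + f n * h m)"

definition gen_mangoldt :: "(nat \<Rightarrow> complex) \<Rightarrow> (nat \<Rightarrow> complex) \<Rightarrow> nat \<Rightarrow> complex" where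
  "gen_mangoldt f h n =
     (if \<exists>p k. prime p \<and> k \<ge> 1 \<and> n = p ^ k
      then (let p = (THE p. prime p \<and> (\<exists>k\<ge>1. n = p ^ k)) in f p / h p)
      else 0)"

definition dirichlet_conv :: "(nat \<Rightarrow> complex) \<Rightarrow> (nat \<Rightarrow> complex) \<Rightarrow> nat \<Rightarrow> complex" where
  "dirichlet_conv F G n = (\<Sum>d | d dvd n. F d * G (n div d))"

end

theory Submission
  imports Defs "HOL-Number_Theory.Prime_Powers"
begin

text \<open>
  Since \<open>\<Lambda>\<^sub>f\<close> and \<open>\<Lambda>\<^sub>g\<close> vanish off the prime powers, \<open>(\<Lambda>\<^sub>f \<ast> \<Lambda>\<^sub>g)(n)\<close> only sees the
  divisors \<open>d\<close> of \<open>n\<close> for which both \<open>d\<close> and \<open>n/d\<close> are prime powers. For \<open>n = p\<^sup>\<alpha>\<close>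
  these are the \<open>p\<^sup>i\<close> with \<open>0 < i < \<alpha>\<close>, each contributing \<open>\<Lambda>\<^sub>f(p) \<Lambda>\<^sub>g(p)\<close>; for
  \<open>n = p\<^sup>\<alpha> q\<^sup>\<beta>\<close> unique factorisation leaves exactly \<open>p\<^sup>\<alpha>\<close> and \<open>q\<^sup>\<beta>\<close>; and no other \<open>n\<close>
  is a product of two prime powers.
\<close>

lemma gen_mangoldt_altdef:
  "gen_mangoldt f h n = (if primepow n then f (aprimedivisor n) / h (aprimedivisor n) else 0)"
proof (cases "primepow n")
  case True
  then obtain p k where pk: "prime p" "k > 0" "n = p ^ k"
    by (auto simp: primepow_def)
  have "(THE p'. prime p' \<and> (\<exists>k'\<ge>1. n = p' ^ k')) = aprimedivisor n"
  proof (rule the_equality)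
    show "prime (aprimedivisor n) \<and> (\<exists>k'\<ge>1. n = aprimedivisor n ^ k')"
      using pk by (auto simp: aprimedivisor_prime_power intro!: exI[of _ k])
  next
    fix p' assume "prime p' \<and> (\<exists>k'\<ge>1. n = p' ^ k')"
    then show "p' = aprimedivisor n"
      using pk prime_power_inj'(1)[of p p' k] by (force simp: aprimedivisor_prime_power)
  qed
  moreover have "\<exists>p k. prime p \<and> k \<ge> 1 \<and> n = p ^ k"
    using pk by (intro exI[of _ p] exI[of _ k]) auto
  ultimately show ?thesis
    unfolding gen_mangoldt_def Let_def using True by presburger
next
  case False
  moreover have "\<nexists>p k. prime p \<and> k \<ge> 1 \<and> n = p ^ k"
    using False by (auto simp: primepow_def Suc_le_eq)
  ultimately show ?thesis
    unfolding gen_mangoldt_def by (simp only: if_False)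
qed

lemma gen_mangoldt_prime_power [simp]:
  "prime p \<Longrightarrow> k > 0 \<Longrightarrow> gen_mangoldt f h (p ^ k) = f p / h p"
  by (simp add: gen_mangoldt_altdef aprimedivisor_prime_power)

lemma gen_mangoldt_not_primepow:
  "\<not> primepow n \<Longrightarrow> gen_mangoldt f h n = 0"
  by (simp add: gen_mangoldt_altdef)

lemma dirichlet_conv_restrict_support:
  assumes "n > 0" and "\<And>d. \<not> P d \<Longrightarrow> F d = 0" and "\<And>d. \<not> Q d \<Longrightarrow> G d = 0"
  shows "dirichlet_conv F G n = (\<Sum>d | d dvd n \<and> P d \<and> Q (n div d). F d * G (n div d))"
  unfolding dirichlet_conv_def
  by (rule sum.mono_neutral_right) (use assms in auto)

definition primepow_splittings :: "nat \<Rightarrow> nat set" where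
  "primepow_splittings n = {d. d dvd n \<and> primepow d \<and> primepow (n div d)}"

lemma dirichlet_conv_gen_mangoldt:
  "n > 0 \<Longrightarrow> dirichlet_conv (gen_mangoldt f hf) (gen_mangoldt g hg) n
     = (\<Sum>d\<in>primepow_splittings n. gen_mangoldt f hf d * gen_mangoldt g hg (n div d))"
  unfolding primepow_splittings_def
  by (rule dirichlet_conv_restrict_support) (auto simp: gen_mangoldt_not_primepow)

lemma primepow_splittingsE:
  assumes "d \<in> primepow_splittings n"
  obtains p q k j where "prime p" "prime q" "k > 0" "j > 0" "d = p ^ k" "n = p ^ k * q ^ j"
proof -
  from assms obtain p k q j where "prime p" "k > 0" "d = p ^ k" "prime q" "j > 0"
    "n div d = q ^ j" "d dvd n"
    by (auto simp: primepow_splittings_def primepow_def)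
  then show ?thesis
    using that by (metis dvd_mult_div_cancel)
qed

lemma primepow_splittings_nonempty:
  assumes "primepow_splittings n \<noteq> {}"
  shows "(\<exists>p \<alpha>. prime p \<and> \<alpha> \<ge> 1 \<and> n = p ^ \<alpha>)
    \<or> (\<exists>p q \<alpha> \<beta>. prime p \<and> prime q \<and> p \<noteq> q \<and> \<alpha> \<ge> 1 \<and> \<beta> \<ge> 1 \<and> n = p ^ \<alpha> * q ^ \<beta>)"
proof -
  obtain p q k j where pq: "prime p" "prime q" "k \<ge> 1" "j \<ge> 1" "n = p ^ k * q ^ j"
    using assms by (metis equals0I primepow_splittingsE Suc_leI One_nat_def)
  show ?thesis
  proof (cases "p = q")
    case True
    then have "n = p ^ (k + j)"
      using pq by (simp add: power_add)
    then show ?thesis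
      using pq by (metis add_increasing2 le0)
  qed (use pq in blast)
qed

lemma primepow_splittings_prime_power:
  assumes "prime p"
  shows "primepow_splittings (p ^ \<alpha>) = (\<lambda>i. p ^ i) ` {1..<\<alpha>}"
proof -
  have "p > 1"
    using assms prime_gt_1_nat by blast
  have "d \<in> primepow_splittings (p ^ \<alpha>) \<longleftrightarrow> (\<exists>i\<in>{1..<\<alpha>}. d = p ^ i)" for d
  proof
    assume d: "d \<in> primepow_splittings (p ^ \<alpha>)"
    then obtain i where "i \<le> \<alpha>" "d = p ^ i"
      using divides_primepow_nat[OF assms] by (auto simp: primepow_splittings_def)
    moreover from this have "p ^ \<alpha> div d = p ^ (\<alpha> - i)"
      using \<open>p > 1\<close> by (simp add: power_diff)
    ultimately show "\<exists>i\<in>{1..<\<alpha>}. d = p ^ i"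
      using d assms by (auto simp: primepow_splittings_def)
  next
    assume "\<exists>i\<in>{1..<\<alpha>}. d = p ^ i"
    then obtain i where "1 \<le> i" "i < \<alpha>" "d = p ^ i"
      by auto
    moreover from this have "p ^ \<alpha> div d = p ^ (\<alpha> - i)"
      using \<open>p > 1\<close> by (simp add: power_diff)
    ultimately show "d \<in> primepow_splittings (p ^ \<alpha>)"
      using assms by (auto simp: primepow_splittings_def le_imp_power_dvd)
  qed
  then show ?thesis
    by blast
qed

lemma multiplicity_two_prime_powers:
  fixes p q :: nat
  assumes "prime p" "prime q" "p \<noteq> q"
  shows "multiplicity p (p ^ a * q ^ b) = a"
proof -
  have "multiplicity p (p ^ a * q ^ b) = multiplicity p (p ^ a) + multiplicity p (q ^ b)"
    using assms by (intro prime_elem_multiplicity_mult_distrib) (auto simp: prime_gt_0_nat)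
  also have "\<dots> = a"
    using assms by (simp add: multiplicity_distinct_prime_power multiplicity_same_power)
  finally show ?thesis .
qed

lemma two_prime_powers_factor_eq:
  fixes p q r s :: nat
  assumes primes: "prime p" "prime q" "prime r" "prime s" and "p \<noteq> q"
    and exps: "\<alpha> > 0" "\<beta> > 0" "k > 0" "j > 0"
    and eq: "r ^ k * s ^ j = p ^ \<alpha> * q ^ \<beta>"
  shows "r ^ k = p ^ \<alpha> \<or> r ^ k = q ^ \<beta>"
proof -
  have "r \<noteq> s"
  proof
    assume "r = s"
    then have "primepow (p ^ \<alpha> * q ^ \<beta>)"
      using eq primes exps by (metis power_add primepow_prime_power add_pos_pos)
    moreover have "\<not> primepow (p ^ \<alpha> * q ^ \<beta>)"
      using primes exps \<open>p \<noteq> q\<close> by (intro not_primepowI[of p q]) auto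
    ultimately show False
      by contradiction
  qed
  have "r dvd p ^ \<alpha> * q ^ \<beta>"
    using eq exps by (metis dvd_mult2 dvd_power)
  then have "r = p \<or> r = q"
    using primes by (metis prime_dvd_mult_iff prime_dvd_power primes_dvd_imp_eq)
  then show ?thesis
  proof
    assume "r = p"
    then have "k = multiplicity p (p ^ \<alpha> * q ^ \<beta>)"
      using eq primes \<open>r \<noteq> s\<close> multiplicity_two_prime_powers by metis
    then show ?thesis
      using \<open>r = p\<close> primes \<open>p \<noteq> q\<close> multiplicity_two_prime_powers by simp
  next
    assume "r = q"
    then have "k = multiplicity q (q ^ \<beta> * p ^ \<alpha>)"
      using eq primes \<open>r \<noteq> s\<close> multiplicity_two_prime_powers by (metis mult.commute)
    then show ?thesis
      using \<open>r = q\<close> primes \<open>p \<noteq> q\<close> multiplicity_two_prime_powers by simp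
  qed
qed

lemma primepow_splittings_two_primes:
  assumes "prime p" "prime q" "p \<noteq> q" "\<alpha> > 0" "\<beta> > 0"
  shows "primepow_splittings (p ^ \<alpha> * q ^ \<beta>) = {p ^ \<alpha>, q ^ \<beta>}"
proof -
  have quot: "p ^ \<alpha> * q ^ \<beta> div p ^ \<alpha> = q ^ \<beta>" "p ^ \<alpha> * q ^ \<beta> div q ^ \<beta> = p ^ \<alpha>"
    using assms by (simp_all add: prime_gt_0_nat)
  show ?thesis
  proof (intro equalityI subsetI)
    fix d assume "d \<in> primepow_splittings (p ^ \<alpha> * q ^ \<beta>)"
    then obtain r s k j where "prime r" "prime s" "k > 0" "j > 0" "d = r ^ k"
      "p ^ \<alpha> * q ^ \<beta> = r ^ k * s ^ j"
      by (rule primepow_splittingsE)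
    then show "d \<in> {p ^ \<alpha>, q ^ \<beta>}"
      using two_prime_powers_factor_eq[of p q r s] assms by auto
  qed (use assms quot in \<open>auto simp: primepow_splittings_def\<close>)
qed

lemma dirichlet_conv_gen_mangoldt_prime_power:
  assumes "prime p" "\<alpha> > 0"
  shows "dirichlet_conv (gen_mangoldt f hf) (gen_mangoldt g hg) (p ^ \<alpha>)
           = (of_nat \<alpha> - 1) * f p * g p / (hf p * hg p)"
proof -
  have "p > 1"
    using assms prime_gt_1_nat by blast
  then have "inj_on (\<lambda>i. p ^ i) {1..<\<alpha>}"
    by (auto simp: inj_on_def power_inject_exp)
  then have "dirichlet_conv (gen_mangoldt f hf) (gen_mangoldt g hg) (p ^ \<alpha>)
      = (\<Sum>i\<in>{1..<\<alpha>}. gen_mangoldt f hf (p ^ i) * gen_mangoldt g hg (p ^ \<alpha> div p ^ i))"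
    using assms
    by (simp add: dirichlet_conv_gen_mangoldt primepow_splittings_prime_power sum.reindex
        prime_gt_0_nat)
  also have "\<dots> = (\<Sum>i\<in>{1..<\<alpha>}. f p / hf p * (g p / hg p))"
  proof (rule sum.cong)
    fix i assume "i \<in> {1..<\<alpha>}"
    moreover from this have "p ^ \<alpha> div p ^ i = p ^ (\<alpha> - i)"
      using \<open>p > 1\<close> by (simp add: power_diff)
    ultimately show "gen_mangoldt f hf (p ^ i) * gen_mangoldt g hg (p ^ \<alpha> div p ^ i)
        = f p / hf p * (g p / hg p)"
      using assms by simp
  qed simp
  also have "\<dots> = (of_nat \<alpha> - 1) * f p * g p / (hf p * hg p)"
    using assms by (simp add: of_nat_diff)
  finally show ?thesis .
qed

lemma dirichlet_conv_gen_mangoldt_two_primes: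
  assumes "prime p" "prime q" "p \<noteq> q" "\<alpha> > 0" "\<beta> > 0"
  shows "dirichlet_conv (gen_mangoldt f hf) (gen_mangoldt g hg) (p ^ \<alpha> * q ^ \<beta>)
           = f p * g q / (hf p * hg q) + f q * g p / (hf q * hg p)"
proof -
  have "p ^ \<alpha> \<noteq> q ^ \<beta>"
    using assms prime_power_inj'(1) by (metis neq0_conv)
  then show ?thesis
    using assms
    by (simp add: dirichlet_conv_gen_mangoldt primepow_splittings_two_primes prime_gt_0_nat)
qed

theorem theorem2p5:
  fixes f g hf hg :: "nat \<Rightarrow> complex" and n :: nat
  assumes "L_additive_with f hf" and "L_additive_with g hg"
    and "\<And>k. k > 0 \<Longrightarrow> hf k \<noteq> 0" and "\<And>k. k > 0 \<Longrightarrow> hg k \<noteq> 0"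
    and "n > 0"
  shows "(\<forall>p \<alpha>. prime p \<and> \<alpha> \<ge> 1 \<and> n = p ^ \<alpha> \<longrightarrow>
            dirichlet_conv (gen_mangoldt f hf) (gen_mangoldt g hg) n
              = (of_nat \<alpha> - 1) * f p * g p / (hf p * hg p))
       \<and> (\<forall>p q \<alpha> \<beta>. prime p \<and> prime q \<and> p \<noteq> q \<and> \<alpha> \<ge> 1 \<and> \<beta> \<ge> 1 \<and> n = p ^ \<alpha> * q ^ \<beta> \<longrightarrow>
            dirichlet_conv (gen_mangoldt f hf) (gen_mangoldt g hg) n
              = f p * g q / (hf p * hg q) + f q * g p / (hf q * hg p))
       \<and> ((\<nexists>p \<alpha>. prime p \<and> \<alpha> \<ge> 1 \<and> n = p ^ \<alpha>) \<and>
          (\<nexists>p q \<alpha> \<beta>. prime p \<and> prime q \<and> p \<noteq> q \<and> \<alpha> \<ge> 1 \<and> \<beta> \<ge> 1 \<and> n = p ^ \<alpha> * q ^ \<beta>) \<longrightarrow>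
            dirichlet_conv (gen_mangoldt f hf) (gen_mangoldt g hg) n = 0)"
proof (intro conjI allI impI; (elim conjE)?)
  show "dirichlet_conv (gen_mangoldt f hf) (gen_mangoldt g hg) n
          = (of_nat \<alpha> - 1) * f p * g p / (hf p * hg p)"
    if "prime p" "\<alpha> \<ge> 1" "n = p ^ \<alpha>" for p \<alpha>
    using that dirichlet_conv_gen_mangoldt_prime_power by (simp add: Suc_le_eq)
  show "dirichlet_conv (gen_mangoldt f hf) (gen_mangoldt g hg) n
          = f p * g q / (hf p * hg q) + f q * g p / (hf q * hg p)"
    if "prime p" "prime q" "p \<noteq> q" "\<alpha> \<ge> 1" "\<beta> \<ge> 1" "n = p ^ \<alpha> * q ^ \<beta>" for p q \<alpha> \<beta>
    using that dirichlet_conv_gen_mangoldt_two_primes by simp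
  assume "\<nexists>p \<alpha>. prime p \<and> \<alpha> \<ge> 1 \<and> n = p ^ \<alpha>"
    and "\<nexists>p q \<alpha> \<beta>. prime p \<and> prime q \<and> p \<noteq> q \<and> \<alpha> \<ge> 1 \<and> \<beta> \<ge> 1 \<and> n = p ^ \<alpha> * q ^ \<beta>"
  then have "primepow_splittings n = {}"
    using primepow_splittings_nonempty by blast
  then show "dirichlet_conv (gen_mangoldt f hf) (gen_mangoldt g hg) n = 0"
    using \<open>n > 0\<close> by (simp add: dirichlet_conv_gen_mangoldt)
qed

end
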